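(* Let $\Lambda$ be a locally finite $k$-graph with no sources or sinks, and let $\alpha$ be an action of $\mathbb{Z}^l$ on $\Lambda$ by automorphisms. Then $\Lambda$ is $\alpha$-aperiodic if and only if $(\Lambda^\infty,\tau^{\sigma,\alpha})$ is topologically free.
   Context: A $k$-graph is a countable category $\Lambda$ with a functor $d:\Lambda\to\mathbb{N}^k$ with unique factorisation; vertices are degree-$0$ morphisms. Locally finite with no sources or sinks: for each $p$ and vertex $v$, $v\Lambda^p$ and $\Lambda^pv$ are finite and nonempty. An automorphism is a bijective degree-preserving functor. $\Lambda^\infty$ is the set of degree-preserving functors $x:\Omega_k\to\Lambda$ ($\Omega_k=\{(a,b)\in\mathbb{N}^k\times\mathbb{N}^k:a\le b\}$ with $r(a,b)=(a,a)$, $s(a,b)=(b,b)$, $(a,b)(b,c)=(a,c)$, $d(a,b)=b-a$), with topology generated by the cylinder sets $\lambda\Lambda^\infty=\{x:x(0,d(\lambda))=\lambda\}$; $v\Lambda^\infty=\{x:x(0,0)=v\}$; $\sigma^p(x)(0,n)=x(p,p+n)$; $\phi^\infty(x)(0,n)=\phi(x(0,n))$ for an automorphism $\phi$. $\tau^{\sigma,\alpha}_{(p,m)}=\sigma^p\circ\alpha^\infty_{-m}$ for $(p,m)\in\mathbb{N}^k\times\mathbb{N}^l$. $(\Lambda^\infty,\tau^{\sigma,\alpha})$ is topologically free if for all distinct $s,t\in\mathbb{N}^k\times\mathbb{N}^l$ the set $\{x:\tau^{\sigma,\alpha}_s(x)=\tau^{\sigma,\alpha}_t(x)\}$ has empty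 interior. $\Lambda$ is $\alpha$-aperiodic if for each vertex $v$ and distinct $(p,m),(q,n)\in\mathbb{N}^k\times\mathbb{N}^l$ there is $x\in v\Lambda^\infty$ with $\sigma^p(\alpha^\infty_{-m}(x))\ne\sigma^q(\alpha^\infty_{-n}(x))$. *)

theory Defs
  imports "HOL-Analysis.Analysis"
begin

text \<open>Elements of N^k are represented as functions nat => nat vanishing from index k on;
  elements of Z^l as functions nat => int vanishing from index l on.\<close>

definition NV :: "nat \<Rightarrow> (nat \<Rightarrow> nat) set" where
  "NV k = {n. \<forall>i\<ge>k. n i = 0}"

definition ZV :: "nat \<Rightarrow> (nat \<Rightarrow> int) set" where
  "ZV l = {n. \<forall>i\<ge>l. n i = 0}"

text \<open>A category presented by its morphisms; objects are identified with identity morphisms.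
  cmp mu nu is the composite mu nu, defined when src mu = rng nu.\<close>
record 'a kgraph =
  mor :: "'a set"
  rng :: "'a \<Rightarrow> 'a"
  src :: "'a \<Rightarrow> 'a"
  cmp :: "'a \<Rightarrow> 'a \<Rightarrow> 'a"
  deg :: "'a \<Rightarrow> nat \<Rightarrow> nat"

definition is_kgraph :: "nat \<Rightarrow> 'a kgraph \<Rightarrow> bool" where
  "is_kgraph k G \<longleftrightarrow>
     countable (mor G) \<and>
     (\<forall>f\<in>mor G. rng G f \<in> mor G \<and> src G f \<in> mor G) \<and>
     (\<forall>f\<in>mor G. rng G (rng G f) = rng G f \<and> src G (rng G f) = rng G f \<and>
                 rng G (src G f) = src G f \<and> src G (src G f) = src G f) \<and>
     (\<forall>f\<in>mor G. cmp G (rng G f) f = f \<and> cmp G f (src G f) = f) \<and>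
     (\<forall>f\<in>mor G. \<forall>g\<in>mor G. src G f = rng G g \<longrightarrow>
        cmp G f g \<in> mor G \<and> rng G (cmp G f g) = rng G f \<and> src G (cmp G f g) = src G g) \<and>
     (\<forall>f\<in>mor G. \<forall>g\<in>mor G. \<forall>h\<in>mor G. src G f = rng G g \<longrightarrow> src G g = rng G h \<longrightarrow>
        cmp G (cmp G f g) h = cmp G f (cmp G g h)) \<and>
     (\<forall>f\<in>mor G. deg G f \<in> NV k) \<and>
     (\<forall>f\<in>mor G. \<forall>g\<in>mor G. src G f = rng G g \<longrightarrow>
        deg G (cmp G f g) = (\<lambda>i. deg G f i + deg G g i)) \<and>
     (\<forall>f\<in>mor G. \<forall>m\<in>NV k. \<forall>n\<in>NV k. deg G f = (\<lambda>i. m i + n i) \<longrightarrow>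
        (\<exists>!(g, h). g \<in> mor G \<and> h \<in> mor G \<and> src G g = rng G h \<and>
                   deg G g = m \<and> deg G h = n \<and> cmp G g h = f))"

definition vertices :: "'a kgraph \<Rightarrow> 'a set" where
  "vertices G = {v \<in> mor G. deg G v = (\<lambda>_. 0)}"

definition locally_finite_no_sources_sinks :: "nat \<Rightarrow> 'a kgraph \<Rightarrow> bool" where
  "locally_finite_no_sources_sinks k G \<longleftrightarrow>
     (\<forall>p\<in>NV k. \<forall>v\<in>vertices G.
        finite {f \<in> mor G. rng G f = v \<and> deg G f = p} \<and>
        {f \<in> mor G. rng G f = v \<and> deg G f = p} \<noteq> {} \<and>
        finite {f \<in> mor G. src G f = v \<and> deg G f = p} \<and>
        {f \<in> mor G. src G f = v \<and> deg G f = p} \<noteq> {})"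

definition is_automorphism :: "'a kgraph \<Rightarrow> ('a \<Rightarrow> 'a) \<Rightarrow> bool" where
  "is_automorphism G \<phi> \<longleftrightarrow>
     bij_betw \<phi> (mor G) (mor G) \<and>
     (\<forall>f\<in>mor G. deg G (\<phi> f) = deg G f \<and>
                 \<phi> (rng G f) = rng G (\<phi> f) \<and> \<phi> (src G f) = src G (\<phi> f)) \<and>
     (\<forall>f\<in>mor G. \<forall>g\<in>mor G. src G f = rng G g \<longrightarrow> \<phi> (cmp G f g) = cmp G (\<phi> f) (\<phi> g))"

definition is_action :: "nat \<Rightarrow> 'a kgraph \<Rightarrow> ((nat \<Rightarrow> int) \<Rightarrow> 'a \<Rightarrow> 'a) \<Rightarrow> bool" where
  "is_action l G \<alpha> \<longleftrightarrow>
     (\<forall>m\<in>ZV l. is_automorphism G (\<alpha> m)) \<and>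
     (\<forall>f\<in>mor G. \<alpha> (\<lambda>_. 0) f = f) \<and>
     (\<forall>m\<in>ZV l. \<forall>n\<in>ZV l. \<forall>f\<in>mor G. \<alpha> (\<lambda>i. m i + n i) f = \<alpha> m (\<alpha> n f))"

text \<open>Omega_k: pairs (a,b) in N^k x N^k with a <= b. Infinite paths are degree-preserving functors
  Omega_k -> G, represented as functions of (a,b), extensionally undefined off Omega_k.\<close>
definition in_Omega :: "nat \<Rightarrow> (nat \<Rightarrow> nat) \<Rightarrow> (nat \<Rightarrow> nat) \<Rightarrow> bool" where
  "in_Omega k a b \<longleftrightarrow> a \<in> NV k \<and> b \<in> NV k \<and> a \<le> b"

definition inf_paths :: "nat \<Rightarrow> 'a kgraph \<Rightarrow> ((nat \<Rightarrow> nat) \<Rightarrow> (nat \<Rightarrow> nat) \<Rightarrow> 'a) set" where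
  "inf_paths k G = {x.
     (\<forall>a b. in_Omega k a b \<longrightarrow>
        x a b \<in> mor G \<and> deg G (x a b) = (\<lambda>i. b i - a i) \<and>
        rng G (x a b) = x a a \<and> src G (x a b) = x b b) \<and>
     (\<forall>a b e. in_Omega k a b \<longrightarrow> in_Omega k b e \<longrightarrow> cmp G (x a b) (x b e) = x a e) \<and>
     (\<forall>a b. \<not> in_Omega k a b \<longrightarrow> x a b = undefined)}"

definition shift :: "nat \<Rightarrow> (nat \<Rightarrow> nat) \<Rightarrow> ((nat \<Rightarrow> nat) \<Rightarrow> (nat \<Rightarrow> nat) \<Rightarrow> 'a)
                      \<Rightarrow> ((nat \<Rightarrow> nat) \<Rightarrow> (nat \<Rightarrow> nat) \<Rightarrow> 'a)" where
  "shift k p x = (\<lambda>a b. if in_Omega k a b then x (\<lambda>i. a i + p i) (\<lambda>i. b i + p i) else undefined)"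

definition path_map :: "nat \<Rightarrow> ('a \<Rightarrow> 'a) \<Rightarrow> ((nat \<Rightarrow> nat) \<Rightarrow> (nat \<Rightarrow> nat) \<Rightarrow> 'a)
                      \<Rightarrow> ((nat \<Rightarrow> nat) \<Rightarrow> (nat \<Rightarrow> nat) \<Rightarrow> 'a)" where
  "path_map k \<phi> x = (\<lambda>a b. if in_Omega k a b then \<phi> (x a b) else undefined)"

text \<open>tau_(p,m) = sigma^p o alpha^infinity_(-m).\<close>
definition tau :: "nat \<Rightarrow> ((nat \<Rightarrow> int) \<Rightarrow> 'a \<Rightarrow> 'a) \<Rightarrow> (nat \<Rightarrow> nat) \<times> (nat \<Rightarrow> nat)
                    \<Rightarrow> ((nat \<Rightarrow> nat) \<Rightarrow> (nat \<Rightarrow> nat) \<Rightarrow> 'a)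
                    \<Rightarrow> ((nat \<Rightarrow> nat) \<Rightarrow> (nat \<Rightarrow> nat) \<Rightarrow> 'a)" where
  "tau k \<alpha> pm x = shift k (fst pm) (path_map k (\<alpha> (\<lambda>i. - int (snd pm i))) x)"

definition cylinder :: "nat \<Rightarrow> 'a kgraph \<Rightarrow> 'a \<Rightarrow> ((nat \<Rightarrow> nat) \<Rightarrow> (nat \<Rightarrow> nat) \<Rightarrow> 'a) set" where
  "cylinder k G f = {x \<in> inf_paths k G. x (\<lambda>_. 0) (deg G f) = f}"

definition path_topology :: "nat \<Rightarrow> 'a kgraph \<Rightarrow> ((nat \<Rightarrow> nat) \<Rightarrow> (nat \<Rightarrow> nat) \<Rightarrow> 'a) topology" where
  "path_topology k G =
     subtopology (topology_generated_by (cylinder k G ` mor G)) (inf_paths k G)"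

definition topologically_free :: "nat \<Rightarrow> nat \<Rightarrow> 'a kgraph \<Rightarrow> ((nat \<Rightarrow> int) \<Rightarrow> 'a \<Rightarrow> 'a) \<Rightarrow> bool" where
  "topologically_free k l G \<alpha> \<longleftrightarrow>
     (\<forall>s\<in>NV k \<times> NV l. \<forall>t\<in>NV k \<times> NV l. s \<noteq> t \<longrightarrow>
        path_topology k G interior_of {x \<in> inf_paths k G. tau k \<alpha> s x = tau k \<alpha> t x} = {})"

definition alpha_aperiodic :: "nat \<Rightarrow> nat \<Rightarrow> 'a kgraph \<Rightarrow> ((nat \<Rightarrow> int) \<Rightarrow> 'a \<Rightarrow> 'a) \<Rightarrow> bool" where
  "alpha_aperiodic k l G \<alpha> \<longleftrightarrow>
     (\<forall>v\<in>vertices G. \<forall>s\<in>NV k \<times> NV l. \<forall>t\<in>NV k \<times> NV l. s \<noteq> t \<longrightarrow>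
        (\<exists>x\<in>inf_paths k G. x (\<lambda>_. 0) (\<lambda>_. 0) = v \<and> tau k \<alpha> s x \<noteq> tau k \<alpha> t x))"

end

theory Submission
  imports Defs
begin

text \<open>A path x is determined by its initial segments x(0,n), and the cylinders of these
  segments form a neighbourhood base at x. If tau_s and tau_t agreed on a neighbourhood of x,
  they would agree on a cylinder of some morphism f; prepending f to an arbitrary path y from
  s(f) and shifting back by d(f) then gives tau_s y = tau_t y, contradicting aperiodicity at s(f).
  Conversely, the cylinder of a vertex v is open, and it is nonempty because v receives
  morphisms of every degree; so if {tau_s = tau_t} has empty interior, it cannot contain all
  paths from v. Paths with prescribed initial segments are built from coherent families of
  morphisms of every degree, using unique factorisation.\<close>

lemma in_Omega_zero: "r \<in> NV k \<Longrightarrow> in_Omega k (\<lambda>_. 0) r"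
  by (simp add: in_Omega_def NV_def le_fun_def)

lemma in_Omega_translate:
  "in_Omega k a b \<Longrightarrow> n \<in> NV k \<Longrightarrow> in_Omega k (\<lambda>i. a i + n i) (\<lambda>i. b i + n i)"
  by (auto simp: in_Omega_def NV_def le_fun_def)

lemma tau_translate:
  assumes p: "p \<in> NV k" and n: "n \<in> NV k" and ab: "in_Omega k a b"
    and z: "\<forall>a b. in_Omega k a b \<longrightarrow> z (\<lambda>i. a i + n i) (\<lambda>i. b i + n i) = y a b"
  shows "tau k \<alpha> (p, m) y a b = tau k \<alpha> (p, m) z (\<lambda>i. a i + n i) (\<lambda>i. b i + n i)"
proof -
  have ab_p: "in_Omega k (\<lambda>i. a i + p i) (\<lambda>i. b i + p i)" using ab p by (rule in_Omega_translate)
  have "(\<lambda>i. a i + n i + p i) = (\<lambda>i. a i + p i + n i)" "(\<lambda>i. b i + n i + p i) = (\<lambda>i. b i + p i + n i)"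
    by (simp_all add: fun_eq_iff)
  moreover have "z (\<lambda>i. a i + p i + n i) (\<lambda>i. b i + p i + n i) = y (\<lambda>i. a i + p i) (\<lambda>i. b i + p i)"
    using z ab_p by blast
  ultimately show ?thesis
    using ab ab_p in_Omega_translate[OF ab n] in_Omega_translate[OF in_Omega_translate[OF ab n] p]
    by (simp add: tau_def shift_def path_map_def)
qed

lemma tau_eq_if_tau_eq_on_translate:
  assumes "fst s \<in> NV k" "fst t \<in> NV k" "n \<in> NV k"
    and "\<forall>a b. in_Omega k a b \<longrightarrow> z (\<lambda>i. a i + n i) (\<lambda>i. b i + n i) = y a b"
    and "tau k \<alpha> s z = tau k \<alpha> t z"
  shows "tau k \<alpha> s y = tau k \<alpha> t y"
proof (intro ext)
  fix a b
  show "tau k \<alpha> s y a b = tau k \<alpha> t y a b"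
  proof (cases "in_Omega k a b")
    case True
    then show ?thesis
      using tau_translate[OF assms(1,3) True assms(4), of \<alpha> "snd s"]
        tau_translate[OF assms(2,3) True assms(4), of \<alpha> "snd t"] assms(5)
      by simp
  next
    case False
    then show ?thesis by (simp add: tau_def shift_def)
  qed
qed

definition diagonal :: "nat \<Rightarrow> nat \<Rightarrow> nat \<Rightarrow> nat" where
  "diagonal k N = (\<lambda>i. if i < k then N else 0)"

lemma diagonal_NV: "diagonal k N \<in> NV k"
  by (simp add: diagonal_def NV_def)

lemma diagonal_mono: "mono (diagonal k)"
  by (simp add: mono_def diagonal_def le_fun_def)

lemma le_diagonal_sum: "m \<in> NV k \<Longrightarrow> m \<le> diagonal k (\<Sum>i<k. m i)"
  by (auto simp: le_fun_def diagonal_def NV_def intro!: member_le_sum)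

locale k_graph =
  fixes k :: nat and G :: "'a kgraph"
  assumes is_kgraph: "is_kgraph k G"
begin

lemma rng_in_mor: "f \<in> mor G \<Longrightarrow> rng G f \<in> mor G"
  and src_in_mor: "f \<in> mor G \<Longrightarrow> src G f \<in> mor G"
  and rng_rng: "f \<in> mor G \<Longrightarrow> rng G (rng G f) = rng G f"
  and src_rng: "f \<in> mor G \<Longrightarrow> src G (rng G f) = rng G f"
  and rng_src: "f \<in> mor G \<Longrightarrow> rng G (src G f) = src G f"
  and cmp_rng: "f \<in> mor G \<Longrightarrow> cmp G (rng G f) f = f"
  and cmp_src: "f \<in> mor G \<Longrightarrow> cmp G f (src G f) = f"
  and deg_in_NV: "f \<in> mor G \<Longrightarrow> deg G f \<in> NV k"
  using is_kgraph unfolding is_kgraph_def by auto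

lemma cmp_in_mor: "f \<in> mor G \<Longrightarrow> g \<in> mor G \<Longrightarrow> src G f = rng G g \<Longrightarrow> cmp G f g \<in> mor G"
  and rng_cmp: "f \<in> mor G \<Longrightarrow> g \<in> mor G \<Longrightarrow> src G f = rng G g \<Longrightarrow> rng G (cmp G f g) = rng G f"
  and src_cmp: "f \<in> mor G \<Longrightarrow> g \<in> mor G \<Longrightarrow> src G f = rng G g \<Longrightarrow> src G (cmp G f g) = src G g"
  and deg_cmp: "f \<in> mor G \<Longrightarrow> g \<in> mor G \<Longrightarrow> src G f = rng G g \<Longrightarrow>
    deg G (cmp G f g) = (\<lambda>i. deg G f i + deg G g i)"
  using is_kgraph unfolding is_kgraph_def by auto

lemma cmp_assoc:
  "f \<in> mor G \<Longrightarrow> g \<in> mor G \<Longrightarrow> h \<in> mor G \<Longrightarrow> src G f = rng G g \<Longrightarrow> src G g = rng G h \<Longrightarrow>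
   cmp G (cmp G f g) h = cmp G f (cmp G g h)"
  using is_kgraph unfolding is_kgraph_def by blast

lemma unique_factorisation:
  "f \<in> mor G \<Longrightarrow> m \<in> NV k \<Longrightarrow> n \<in> NV k \<Longrightarrow> deg G f = (\<lambda>i. m i + n i) \<Longrightarrow>
   \<exists>!(g, h). g \<in> mor G \<and> h \<in> mor G \<and> src G g = rng G h \<and>
      deg G g = m \<and> deg G h = n \<and> cmp G g h = f"
  using is_kgraph unfolding is_kgraph_def by auto

lemma deg_rng: "f \<in> mor G \<Longrightarrow> deg G (rng G f) = (\<lambda>_. 0)"
  using deg_cmp[of "rng G f" f] by (simp add: rng_in_mor rng_rng src_rng cmp_rng fun_eq_iff)

lemma deg_src: "f \<in> mor G \<Longrightarrow> deg G (src G f) = (\<lambda>_. 0)"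
  using deg_rng[of "src G f"] by (simp add: src_in_mor rng_src)

lemma src_in_vertices: "f \<in> mor G \<Longrightarrow> src G f \<in> vertices G"
  by (simp add: vertices_def src_in_mor deg_src)

subsection \<open>Factorisation into head and tail\<close>

definition is_factorisation :: "'a \<Rightarrow> (nat \<Rightarrow> nat) \<Rightarrow> 'a \<Rightarrow> 'a \<Rightarrow> bool" where
  "is_factorisation f m g h \<longleftrightarrow> g \<in> mor G \<and> h \<in> mor G \<and> src G g = rng G h \<and>
     deg G g = m \<and> deg G h = (\<lambda>i. deg G f i - m i) \<and> cmp G g h = f"

text \<open>For m \<le> d(f) these are f(0,m) and f(m,d(f)); otherwise they are unspecified.\<close>
definition factor_head :: "'a \<Rightarrow> (nat \<Rightarrow> nat) \<Rightarrow> 'a" where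
  "factor_head f m = fst (THE p. case_prod (is_factorisation f m) p)"

definition factor_tail :: "'a \<Rightarrow> (nat \<Rightarrow> nat) \<Rightarrow> 'a" where
  "factor_tail f m = snd (THE p. case_prod (is_factorisation f m) p)"

lemma ex1_factorisation:
  assumes "f \<in> mor G" "m \<in> NV k" "m \<le> deg G f"
  shows "\<exists>!p. case_prod (is_factorisation f m) p"
proof -
  have "(\<lambda>i. deg G f i - m i) \<in> NV k" using deg_in_NV[OF assms(1)] by (simp add: NV_def)
  moreover have "deg G f = (\<lambda>i. m i + (deg G f i - m i))"
    using assms(3) by (auto simp: le_fun_def fun_eq_iff)
  ultimately show ?thesis
    using unique_factorisation[OF assms(1,2)] unfolding is_factorisation_def by simp
qed

lemma factors:
  assumes "f \<in> mor G" "m \<in> NV k" "m \<le> deg G f"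
  shows "factor_head f m \<in> mor G" "factor_tail f m \<in> mor G"
    "src G (factor_head f m) = rng G (factor_tail f m)"
    "deg G (factor_head f m) = m" "deg G (factor_tail f m) = (\<lambda>i. deg G f i - m i)"
    "cmp G (factor_head f m) (factor_tail f m) = f"
proof -
  obtain g h where gh: "(THE p. case_prod (is_factorisation f m) p) = (g, h)"
    by (cases "THE p. case_prod (is_factorisation f m) p")
  have "is_factorisation f m (factor_head f m) (factor_tail f m)"
    using theI'[OF ex1_factorisation[OF assms]] unfolding factor_head_def factor_tail_def gh by simp
  then show "factor_head f m \<in> mor G" "factor_tail f m \<in> mor G"
    "src G (factor_head f m) = rng G (factor_tail f m)"
    "deg G (factor_head f m) = m" "deg G (factor_tail f m) = (\<lambda>i. deg G f i - m i)"
    "cmp G (factor_head f m) (factor_tail f m) = f"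
    unfolding is_factorisation_def by auto
qed

lemma
  assumes "g \<in> mor G" "h \<in> mor G" "src G g = rng G h"
  shows factor_head_cmp: "factor_head (cmp G g h) (deg G g) = g"
    and factor_tail_cmp: "factor_tail (cmp G g h) (deg G g) = h"
proof -
  let ?f = "cmp G g h"
  have "\<exists>!p. case_prod (is_factorisation ?f (deg G g)) p"
    using assms by (intro ex1_factorisation) (auto simp: cmp_in_mor deg_in_NV deg_cmp le_fun_def)
  moreover have "is_factorisation ?f (deg G g) g h"
    using assms by (simp add: is_factorisation_def deg_cmp)
  ultimately have "(THE p. case_prod (is_factorisation ?f (deg G g)) p) = (g, h)"
    by (simp add: the1_equality)
  then show "factor_head ?f (deg G g) = g" "factor_tail ?f (deg G g) = h"
    unfolding factor_head_def factor_tail_def by simp_all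
qed

lemma factor_head_deg: "f \<in> mor G \<Longrightarrow> factor_head f (deg G f) = f"
  using factor_head_cmp[of f "src G f"] by (simp add: cmp_src src_in_mor rng_src)

lemma factor_tail_zero: "f \<in> mor G \<Longrightarrow> factor_tail f (\<lambda>_. 0) = f"
  using factor_tail_cmp[of "rng G f" f] by (simp add: cmp_rng rng_in_mor src_rng deg_rng)

lemma src_factor_tail:
  assumes "f \<in> mor G" "m \<in> NV k" "m \<le> deg G f"
  shows "src G (factor_tail f m) = src G f"
  using src_cmp[OF factors(1-3)[OF assms]] factors(6)[OF assms] by simp

lemma
  assumes f: "f \<in> mor G" and m: "m \<in> NV k" and n: "n \<in> NV k" and "m \<le> n" and "n \<le> deg G f"
  shows factor_head_factor_head: "factor_head (factor_head f n) m = factor_head f m"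
    and factor_tail_factor_head:
      "factor_tail (factor_head f n) m = factor_head (factor_tail f m) (\<lambda>i. n i - m i)"
    and factor_tail_factor_tail:
      "factor_tail (factor_tail f m) (\<lambda>i. n i - m i) = factor_tail f n"
proof -
  define g h where "g = factor_head f n" and "h = factor_tail f n"
  note gh = factors[OF f n \<open>n \<le> deg G f\<close>, folded g_def h_def]
  have "m \<le> deg G g" using gh \<open>m \<le> n\<close> by simp
  define g1 g2 where "g1 = factor_head g m" and "g2 = factor_tail g m"
  note g12 = factors[OF gh(1) m \<open>m \<le> deg G g\<close>, folded g1_def g2_def]
  have g2h: "src G g2 = rng G h"
    using src_factor_tail[OF gh(1) m \<open>m \<le> deg G g\<close>] gh(3) by (simp add: g2_def)
  have "f = cmp G g1 (cmp G g2 h)"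
    using gh(6) g12(6) cmp_assoc[OF g12(1,2) gh(2) g12(3) g2h] by simp
  then have "factor_head f m = g1" "factor_tail f m = cmp G g2 h"
    using factor_head_cmp[of g1 "cmp G g2 h"] factor_tail_cmp[of g1 "cmp G g2 h"]
      g12 gh g2h cmp_in_mor rng_cmp by simp_all
  moreover have "deg G g2 = (\<lambda>i. n i - m i)" using g12(5) gh(4) by simp
  ultimately show "factor_head (factor_head f n) m = factor_head f m"
    and "factor_tail (factor_head f n) m = factor_head (factor_tail f m) (\<lambda>i. n i - m i)"
    and "factor_tail (factor_tail f m) (\<lambda>i. n i - m i) = factor_tail f n"
    using factor_head_cmp[OF g12(2) gh(2) g2h] factor_tail_cmp[OF g12(2) gh(2) g2h]
    by (simp_all add: g_def g1_def g2_def h_def)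
qed

subsection \<open>Infinite paths from coherent families\<close>

lemma inf_pathD:
  assumes "x \<in> inf_paths k G" "in_Omega k a b"
  shows "x a b \<in> mor G" "deg G (x a b) = (\<lambda>i. b i - a i)"
    "rng G (x a b) = x a a" "src G (x a b) = x b b"
  using assms unfolding inf_paths_def by auto

lemma inf_path_cmp:
  "x \<in> inf_paths k G \<Longrightarrow> in_Omega k a b \<Longrightarrow> in_Omega k b e \<Longrightarrow> cmp G (x a b) (x b e) = x a e"
  unfolding inf_paths_def by auto

lemma deg_inf_path_initial: "x \<in> inf_paths k G \<Longrightarrow> n \<in> NV k \<Longrightarrow> deg G (x (\<lambda>_. 0) n) = n"
  using inf_pathD(2)[OF _ in_Omega_zero] by simp

lemma
  assumes x: "x \<in> inf_paths k G" and "a \<in> NV k" "b \<in> NV k" "a \<le> b"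
  shows factor_head_inf_path: "factor_head (x (\<lambda>_. 0) b) a = x (\<lambda>_. 0) a"
    and factor_tail_inf_path: "factor_tail (x (\<lambda>_. 0) b) a = x a b"
proof -
  have 0: "in_Omega k (\<lambda>_. 0) a" using in_Omega_zero \<open>a \<in> NV k\<close> .
  have ab: "in_Omega k a b" using assms by (simp add: in_Omega_def)
  have "x (\<lambda>_. 0) b = cmp G (x (\<lambda>_. 0) a) (x a b)" using inf_path_cmp[OF x 0 ab] by simp
  then show "factor_head (x (\<lambda>_. 0) b) a = x (\<lambda>_. 0) a" "factor_tail (x (\<lambda>_. 0) b) a = x a b"
    using factor_head_cmp[OF inf_pathD(1)[OF x 0] inf_pathD(1)[OF x ab]]
      factor_tail_cmp[OF inf_pathD(1)[OF x 0] inf_pathD(1)[OF x ab]]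
      inf_pathD[OF x 0] inf_pathD[OF x ab] by simp_all
qed

lemma inf_path_of_coherent_family:
  assumes w: "\<And>n. n \<in> NV k \<Longrightarrow> w n \<in> mor G \<and> deg G (w n) = n"
    and coherent: "\<And>n n'. n \<in> NV k \<Longrightarrow> n' \<in> NV k \<Longrightarrow> n \<le> n' \<Longrightarrow> factor_head (w n') n = w n"
  defines "x \<equiv> \<lambda>a b. if in_Omega k a b then factor_tail (w b) a else undefined"
  shows "x \<in> inf_paths k G" and "\<And>n. n \<in> NV k \<Longrightarrow> x (\<lambda>_. 0) n = w n"
proof -
  have segment: "x a b \<in> mor G \<and> deg G (x a b) = (\<lambda>i. b i - a i) \<and>
      rng G (x a b) = x a a \<and> src G (x a b) = x b b" if ab: "in_Omega k a b" for a b
  proof -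
    have a: "a \<in> NV k" and b: "b \<in> NV k" using ab by (auto simp: in_Omega_def)
    have "a \<le> deg G (w b)" using ab w[OF b] by (simp add: in_Omega_def)
    note wb = factors[OF conjunct1[OF w[OF b]] a this]
    have "rng G (factor_tail (w b) a) = factor_tail (w a) a"
      using wb(3) coherent[OF a b] ab factor_tail_cmp[of "w a" "src G (w a)"] w[OF a]
      by (simp add: in_Omega_def cmp_src src_in_mor rng_src)
    moreover have "src G (factor_tail (w b) a) = factor_tail (w b) b"
      using src_factor_tail[OF _ a \<open>a \<le> deg G (w b)\<close>] factor_tail_cmp[of "w b" "src G (w b)"] w[OF b]
      by (simp add: cmp_src src_in_mor rng_src)
    ultimately show ?thesis using ab wb w[OF b] by (simp add: x_def in_Omega_def)
  qed
  have "cmp G (x a b) (x b e) = x a e" if ab: "in_Omega k a b" and be: "in_Omega k b e" for a b e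
  proof -
    have a: "a \<in> NV k" and b: "b \<in> NV k" and e: "e \<in> NV k" and "a \<le> b" "b \<le> e"
      using ab be by (auto simp: in_Omega_def)
    then have ae: "in_Omega k a e" by (auto simp: in_Omega_def)
    have we: "w e \<in> mor G" "deg G (w e) = e" using w[OF e] by auto
    let ?u = "factor_tail (w e) a" and ?d = "\<lambda>i. b i - a i"
    have u: "?u \<in> mor G" "deg G ?u = (\<lambda>i. e i - a i)"
      using factors[OF we(1) a] \<open>a \<le> b\<close> \<open>b \<le> e\<close> we(2) by auto
    have "?d \<in> NV k" "?d \<le> deg G ?u"
      using b u(2) \<open>b \<le> e\<close> by (auto simp: NV_def le_fun_def intro: diff_le_mono)
    have "b \<le> deg G (w e)" using we(2) \<open>b \<le> e\<close> by simp
    note tails = factor_tail_factor_head[OF we(1) a b \<open>a \<le> b\<close> this]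
      factor_tail_factor_tail[OF we(1) a b \<open>a \<le> b\<close> this]
    have "cmp G (x a b) (x b e) = cmp G (factor_tail (w b) a) (factor_tail (w e) b)"
      using ab be by (simp add: x_def)
    also have "\<dots> = cmp G (factor_head ?u ?d) (factor_tail ?u ?d)"
      using tails coherent[OF b e \<open>b \<le> e\<close>] by simp
    also have "\<dots> = ?u" using factors(6)[OF u(1) \<open>?d \<in> NV k\<close> \<open>?d \<le> deg G ?u\<close>] .
    finally show ?thesis using ae by (simp add: x_def)
  qed
  with segment show "x \<in> inf_paths k G" unfolding inf_paths_def by (auto simp: x_def)
  show "x (\<lambda>_. 0) n = w n" if "n \<in> NV k" for n
    using that in_Omega_zero[OF that] factor_tail_zero w by (simp add: x_def)
qed

lemma inf_path_of_chain:
  assumes F: "\<And>i. i \<in> I \<Longrightarrow> F i \<in> mor G \<and> deg G (F i) = g i"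
    and chain: "\<And>i j. i \<in> I \<Longrightarrow> j \<in> I \<Longrightarrow> i \<le> j \<Longrightarrow> g i \<le> g j \<and> factor_head (F j) (g i) = F i"
    and cofinal: "\<And>n. n \<in> NV k \<Longrightarrow> c n \<in> I \<and> n \<le> g (c n)"
    and c_mono: "\<And>n n'. n \<in> NV k \<Longrightarrow> n' \<in> NV k \<Longrightarrow> n \<le> n' \<Longrightarrow> c n \<le> c n'"
  obtains x where "x \<in> inf_paths k G" "\<And>n. n \<in> NV k \<Longrightarrow> x (\<lambda>_. 0) n = factor_head (F (c n)) n"
proof -
  define w where "w n = factor_head (F (c n)) n" for n
  have Fc: "F (c n) \<in> mor G" "deg G (F (c n)) = g (c n)" "g (c n) \<in> NV k" if "n \<in> NV k" for n
  proof -
    show "F (c n) \<in> mor G" "deg G (F (c n)) = g (c n)" using F cofinal[OF that] by auto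
    then show "g (c n) \<in> NV k" using deg_in_NV by metis
  qed
  have "w n \<in> mor G \<and> deg G (w n) = n" if "n \<in> NV k" for n
    using factors(1,4)[OF Fc(1)[OF that] that] Fc(2)[OF that] cofinal[OF that] by (simp add: w_def)
  moreover have "factor_head (w n') n = w n" if n: "n \<in> NV k" and n': "n' \<in> NV k" and "n \<le> n'" for n n'
  proof -
    have cc: "c n \<in> I" "c n' \<in> I" "c n \<le> c n'" using cofinal n n' c_mono[OF n n' \<open>n \<le> n'\<close>] by auto
    have "factor_head (w n') n = factor_head (F (c n')) n"
      using factor_head_factor_head[OF Fc(1)[OF n'] n n' \<open>n \<le> n'\<close>] Fc(2)[OF n'] cofinal[OF n']
      by (simp add: w_def)
    also have "\<dots> = factor_head (factor_head (F (c n')) (g (c n))) n"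
      using factor_head_factor_head[OF Fc(1)[OF n'] n Fc(3)[OF n]] cofinal[OF n] chain[OF cc] Fc(2)[OF n']
      by simp
    also have "\<dots> = w n" using chain[OF cc] by (simp add: w_def)
    finally show ?thesis .
  qed
  ultimately show ?thesis
    using inf_path_of_coherent_family[of w] that by (simp add: w_def)
qed

lemma factor_head_chain_of_steps:
  assumes L: "\<And>N. L N \<in> mor G \<and> deg G (L N) = g N" and "mono g"
    and head_Suc: "\<And>N. factor_head (L (Suc N)) (g N) = L N"
  shows "N \<le> N' \<Longrightarrow> factor_head (L N') (g N) = L N"
proof (induction N' rule: dec_induct)
  case base
  show ?case using factor_head_deg[of "L N"] L[of N] by simp
next
  case (step N')
  have "g N \<le> g N'" "g N' \<le> g (Suc N')" using \<open>mono g\<close> \<open>N \<le> N'\<close> by (simp_all add: monoD)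
  then have "factor_head (L (Suc N')) (g N) = factor_head (factor_head (L (Suc N')) (g N')) (g N)"
    using factor_head_factor_head[of "L (Suc N')" "g N" "g N'"] L deg_in_NV by metis
  then show ?case using step.IH head_Suc by simp
qed

text \<open>Each step appends a morphism of degree (1,...,1) leaving the end of the previous one;
  such morphisms exist because G has no sources.\<close>
lemma exists_diagonal_chain:
  assumes no_sources: "locally_finite_no_sources_sinks k G" and v: "v \<in> vertices G"
  obtains L where "L 0 = v" "\<And>N. L N \<in> mor G \<and> deg G (L N) = diagonal k N"
    "\<And>N. factor_head (L (Suc N)) (diagonal k N) = L N"
proof -
  have "\<exists>e. e \<in> mor G \<and> rng G e = u \<and> deg G e = diagonal k 1" if "u \<in> vertices G" for u
    using no_sources that diagonal_NV unfolding locally_finite_no_sources_sinks_def by blast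
  then obtain E where
    E: "\<And>u. u \<in> vertices G \<Longrightarrow> E u \<in> mor G \<and> rng G (E u) = u \<and> deg G (E u) = diagonal k 1"
    by metis
  have E_src: "E (src G f) \<in> mor G" "src G f = rng G (E (src G f))" "deg G (E (src G f)) = diagonal k 1"
    if "f \<in> mor G" for f
    using E[OF src_in_vertices[OF that]] by auto
  define L where "L = rec_nat v (\<lambda>_ f. cmp G f (E (src G f)))"
  have L_0: "L 0 = v" and L_Suc: "L (Suc N) = cmp G (L N) (E (src G (L N)))" for N
    by (simp_all add: L_def)
  have L: "L N \<in> mor G \<and> deg G (L N) = diagonal k N" for N
  proof (induction N)
    case 0
    show ?case using v by (simp add: L_0 vertices_def diagonal_def fun_eq_iff)
  next
    case (Suc N)
    then have LN: "L N \<in> mor G" "deg G (L N) = diagonal k N" by auto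
    then show ?case
      using cmp_in_mor[OF LN(1) E_src(1,2)[OF LN(1)]] deg_cmp[OF LN(1) E_src(1,2)[OF LN(1)]]
        E_src(3)[OF LN(1)]
      by (simp add: L_Suc diagonal_def fun_eq_iff)
  qed
  moreover have "factor_head (L (Suc N)) (diagonal k N) = L N" for N
  proof -
    have LN: "L N \<in> mor G" "deg G (L N) = diagonal k N" using L by auto
    show ?thesis using factor_head_cmp[OF LN(1) E_src(1,2)[OF LN(1)]] LN(2) by (simp add: L_Suc)
  qed
  ultimately show ?thesis using that L_0 by blast
qed

lemma exists_inf_path_from_vertex:
  assumes "locally_finite_no_sources_sinks k G" and v: "v \<in> vertices G"
  obtains x where "x \<in> inf_paths k G" "x (\<lambda>_. 0) (\<lambda>_. 0) = v"
proof -
  obtain L where L_0: "L 0 = v" and L: "\<And>N. L N \<in> mor G \<and> deg G (L N) = diagonal k N"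
    and head_Suc: "\<And>N. factor_head (L (Suc N)) (diagonal k N) = L N"
    using exists_diagonal_chain[OF assms] by blast
  have chain: "i \<le> j \<Longrightarrow> diagonal k i \<le> diagonal k j \<and> factor_head (L j) (diagonal k i) = L i"
    for i j
    using factor_head_chain_of_steps[OF L diagonal_mono head_Suc] diagonal_mono by (simp add: monoD)
  have sum_mono: "n \<le> n' \<Longrightarrow> (\<Sum>i<k. n i) \<le> (\<Sum>i<k. n' i)" for n n' :: "nat \<Rightarrow> nat"
    by (simp add: le_fun_def sum_mono)
  obtain x where "x \<in> inf_paths k G"
    "\<And>n. n \<in> NV k \<Longrightarrow> x (\<lambda>_. 0) n = factor_head (L (\<Sum>i<k. n i)) n"
  proof (rule inf_path_of_chain[of UNIV L "diagonal k" "\<lambda>n. \<Sum>i<k. n i"])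
  qed (use L chain le_diagonal_sum sum_mono in auto)
  moreover have "factor_head (L 0) (\<lambda>_. 0) = v"
    using factor_head_deg[of v] v by (simp add: L_0 vertices_def)
  ultimately show ?thesis using that by (simp add: NV_def)
qed

lemma exists_inf_path_through_prepended:
  assumes f: "f \<in> mor G" and y: "y \<in> inf_paths k G" and y0: "y (\<lambda>_. 0) (\<lambda>_. 0) = src G f"
  obtains z where "z \<in> inf_paths k G"
    "\<And>r. r \<in> NV k \<Longrightarrow> z (\<lambda>_. 0) (\<lambda>i. r i + deg G f i) = cmp G f (y (\<lambda>_. 0) r)"
proof -
  define n where "n = deg G f"
  have n: "n \<in> NV k" using deg_in_NV[OF f] by (simp add: n_def)
  define F where "F r = cmp G f (y (\<lambda>_. 0) r)" for r
  have y_r: "y (\<lambda>_. 0) r \<in> mor G" "deg G (y (\<lambda>_. 0) r) = r" "src G f = rng G (y (\<lambda>_. 0) r)"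
    if "r \<in> NV k" for r
    using inf_pathD[OF y in_Omega_zero[OF that]] inf_pathD(4)[OF y in_Omega_zero[of "\<lambda>_. 0"]] y0
    by (simp_all add: NV_def)
  have F: "F r \<in> mor G \<and> deg G (F r) = (\<lambda>i. n i + r i)" if "r \<in> NV k" for r
    using cmp_in_mor[OF f y_r(1,3)[OF that]] deg_cmp[OF f y_r(1,3)[OF that]] y_r(2)[OF that]
    by (simp add: F_def n_def)
  have chain: "factor_head (F r') (\<lambda>i. n i + r i) = F r"
    if r: "r \<in> NV k" and "r' \<in> NV k" "r \<le> r'" for r r'
  proof -
    have rr': "in_Omega k r r'" using that by (simp add: in_Omega_def)
    have s: "src G (y (\<lambda>_. 0) r) = rng G (y r r')"
      using inf_pathD[OF y in_Omega_zero[OF r]] inf_pathD[OF y rr'] by simp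
    have "F r' = cmp G (F r) (y r r')"
      using inf_path_cmp[OF y in_Omega_zero[OF r] rr']
        cmp_assoc[OF f y_r(1)[OF r] inf_pathD(1)[OF y rr'] y_r(3)[OF r] s]
      by (simp add: F_def)
    moreover have "src G (F r) = rng G (y r r')"
      using src_cmp[OF f y_r(1,3)[OF r]] s by (simp add: F_def)
    ultimately show ?thesis
      using factor_head_cmp[of "F r" "y r r'"] F[OF r] inf_pathD(1)[OF y rr'] by simp
  qed
  text \<open>c m is the least r with m \<le> d(F r).\<close>
  define c where "c m = (\<lambda>i. max (m i) (n i) - n i)" for m :: "nat \<Rightarrow> nat"
  have cofinal: "c m \<in> NV k \<and> m \<le> (\<lambda>i. n i + c m i)" if "m \<in> NV k" for m
    using that n by (simp add: c_def NV_def le_fun_def)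
  have c_mono: "c m \<le> c m'" if "m \<le> m'" for m m'
    using that by (auto simp: c_def le_fun_def intro!: diff_le_mono max.mono)
  obtain z where z: "z \<in> inf_paths k G"
    and z0: "\<And>m. m \<in> NV k \<Longrightarrow> z (\<lambda>_. 0) m = factor_head (F (c m)) m"
  proof (rule inf_path_of_chain[of "NV k" F "\<lambda>r i. n i + r i" c])
  qed (use F chain cofinal c_mono in \<open>auto simp: le_fun_def\<close>)
  have "z (\<lambda>_. 0) (\<lambda>i. r i + n i) = F r" if r: "r \<in> NV k" for r
  proof -
    have "(\<lambda>i. r i + n i) \<in> NV k" using r n by (simp add: NV_def)
    then have "z (\<lambda>_. 0) (\<lambda>i. r i + n i) = factor_head (F r) (\<lambda>i. r i + n i)"
      using z0 by (simp add: c_def)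
    moreover have "deg G (F r) = (\<lambda>i. r i + n i)" using F[OF r] by (simp add: add.commute)
    ultimately show ?thesis using factor_head_deg conjunct1[OF F[OF r]] by metis
  qed
  then show ?thesis using that z by (simp add: F_def n_def)
qed

lemma exists_inf_path_prepend:
  assumes f: "f \<in> mor G" and y: "y \<in> inf_paths k G" and y0: "y (\<lambda>_. 0) (\<lambda>_. 0) = src G f"
  obtains z where "z \<in> inf_paths k G" "z (\<lambda>_. 0) (deg G f) = f"
    "\<forall>a b. in_Omega k a b \<longrightarrow> z (\<lambda>i. a i + deg G f i) (\<lambda>i. b i + deg G f i) = y a b"
proof -
  define n where "n = deg G f"
  have n: "n \<in> NV k" using deg_in_NV[OF f] by (simp add: n_def)
  obtain z where z: "z \<in> inf_paths k G"
    and z0: "\<And>r. r \<in> NV k \<Longrightarrow> z (\<lambda>_. 0) (\<lambda>i. r i + n i) = cmp G f (y (\<lambda>_. 0) r)"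
    using exists_inf_path_through_prepended[OF assms] unfolding n_def by blast
  have "z (\<lambda>_. 0) n = f" using z0[of "\<lambda>_. 0"] cmp_src[OF f] y0 by (simp add: NV_def)
  moreover have "z (\<lambda>i. a i + n i) (\<lambda>i. b i + n i) = y a b" if ab: "in_Omega k a b" for a b
  proof -
    have a: "a \<in> NV k" and b: "b \<in> NV k" and "a \<le> b" using ab by (auto simp: in_Omega_def)
    have 0: "in_Omega k (\<lambda>_. 0) b" using in_Omega_zero[OF b] .
    have yb: "y (\<lambda>_. 0) b \<in> mor G" "src G f = rng G (y (\<lambda>_. 0) b)"
      using inf_pathD[OF y 0] inf_pathD(4)[OF y in_Omega_zero[of "\<lambda>_. 0"]] y0 by (simp_all add: NV_def)
    have an: "(\<lambda>i. a i + n i) \<in> NV k" and bn: "(\<lambda>i. b i + n i) \<in> NV k"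
      and "(\<lambda>i. a i + n i) \<le> (\<lambda>i. b i + n i)"
      using a b n \<open>a \<le> b\<close> by (auto simp: NV_def le_fun_def)
    then have "z (\<lambda>i. a i + n i) (\<lambda>i. b i + n i) = factor_tail (cmp G f (y (\<lambda>_. 0) b)) (\<lambda>i. a i + n i)"
      using factor_tail_inf_path[OF z an bn] z0[OF b] by simp
    also have "\<dots> = factor_tail (factor_tail (cmp G f (y (\<lambda>_. 0) b)) n) a"
      using factor_tail_factor_tail[OF cmp_in_mor[OF f yb] n an] deg_cmp[OF f yb] \<open>a \<le> b\<close>
        deg_inf_path_initial[OF y b]
      by (simp add: le_fun_def n_def add.commute)
    also have "\<dots> = y a b"
      using factor_tail_cmp[OF f yb] factor_tail_inf_path[OF y a b \<open>a \<le> b\<close>] by (simp add: n_def)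
    finally show ?thesis .
  qed
  ultimately show ?thesis using that z by (simp add: n_def)
qed

subsection \<open>The cylinder topology\<close>

lemma cylinder_initial_antimono:
  assumes x: "x \<in> inf_paths k G" and "n \<in> NV k" "n' \<in> NV k" "n \<le> n'"
  shows "cylinder k G (x (\<lambda>_. 0) n') \<subseteq> cylinder k G (x (\<lambda>_. 0) n)"
proof
  fix z assume "z \<in> cylinder k G (x (\<lambda>_. 0) n')"
  then have z: "z \<in> inf_paths k G" and "z (\<lambda>_. 0) n' = x (\<lambda>_. 0) n'"
    using deg_inf_path_initial[OF x \<open>n' \<in> NV k\<close>] by (auto simp: cylinder_def)
  then have "z (\<lambda>_. 0) n = x (\<lambda>_. 0) n"
    using factor_head_inf_path[OF z assms(2-4)] factor_head_inf_path[OF x assms(2-4)] by simp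
  then show "z \<in> cylinder k G (x (\<lambda>_. 0) n)"
    using z deg_inf_path_initial[OF x \<open>n \<in> NV k\<close>] by (simp add: cylinder_def)
qed

lemma openin_cylinder: "f \<in> mor G \<Longrightarrow> openin (path_topology k G) (cylinder k G f)"
proof -
  assume "f \<in> mor G"
  then have "openin (path_topology k G) (cylinder k G f \<inter> inf_paths k G)"
    unfolding path_topology_def by (intro openin_subtopology_Int topology_generated_by_Basis) blast
  moreover have "cylinder k G f \<inter> inf_paths k G = cylinder k G f" by (auto simp: cylinder_def)
  ultimately show ?thesis by simp
qed

lemma generated_open_contains_cylinder:
  "generate_topology_on (cylinder k G ` mor G) U \<Longrightarrow> x \<in> U \<Longrightarrow> x \<in> inf_paths k G \<Longrightarrow>
   \<exists>n\<in>NV k. cylinder k G (x (\<lambda>_. 0) n) \<subseteq> U"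
proof (induction arbitrary: x rule: generate_topology_on.induct)
  case (Int U V)
  then obtain n n' where n: "n \<in> NV k" "cylinder k G (x (\<lambda>_. 0) n) \<subseteq> U"
    and n': "n' \<in> NV k" "cylinder k G (x (\<lambda>_. 0) n') \<subseteq> V" by blast
  define m where "m = (\<lambda>i. max (n i) (n' i))"
  have m: "m \<in> NV k" "n \<le> m" "n' \<le> m" using n(1) n'(1) by (auto simp: m_def NV_def le_fun_def)
  then have "cylinder k G (x (\<lambda>_. 0) m) \<subseteq> U \<inter> V"
    using cylinder_initial_antimono[OF \<open>x \<in> inf_paths k G\<close> n(1) m(1,2)]
      cylinder_initial_antimono[OF \<open>x \<in> inf_paths k G\<close> n'(1) m(1,3)] n(2) n'(2) by blast
  then show ?case using m(1) by blast
next
  case (Basis U)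
  then obtain f where "f \<in> mor G" "U = cylinder k G f" by blast
  then show ?case using Basis.prems deg_in_NV by (auto simp: cylinder_def intro!: bexI[of _ "deg G f"])
next
  case (UN K)
  then show ?case by blast
qed simp

lemma openin_path_topology_contains_cylinder:
  assumes "openin (path_topology k G) U" "x \<in> U"
  obtains n where "x \<in> inf_paths k G" "n \<in> NV k" "cylinder k G (x (\<lambda>_. 0) n) \<subseteq> U"
proof -
  obtain T where T: "openin (topology_generated_by (cylinder k G ` mor G)) T" "U = T \<inter> inf_paths k G"
    using assms(1) unfolding path_topology_def openin_subtopology by blast
  have "x \<in> inf_paths k G" using T assms(2) by simp
  moreover have "cylinder k G (x (\<lambda>_. 0) n) \<subseteq> inf_paths k G" for n by (auto simp: cylinder_def)
  ultimately show ?thesis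
    using generated_open_contains_cylinder[OF openin_topology_generated_by[OF T(1)]] T assms(2) that
    by blast
qed

subsection \<open>Aperiodicity and topological freeness\<close>

lemma topologically_free_if_aperiodic:
  assumes "alpha_aperiodic k l G \<alpha>"
  shows "topologically_free k l G \<alpha>"
  unfolding topologically_free_def
proof (intro ballI impI)
  fix s t assume st: "s \<in> NV k \<times> NV l" "t \<in> NV k \<times> NV l" "s \<noteq> t"
  let ?E = "{x \<in> inf_paths k G. tau k \<alpha> s x = tau k \<alpha> t x}"
  show "path_topology k G interior_of ?E = {}"
  proof (rule ccontr)
    assume "path_topology k G interior_of ?E \<noteq> {}"
    then obtain x U where U: "openin (path_topology k G) U" "x \<in> U" "U \<subseteq> ?E"
      unfolding interior_of_def by blast
    obtain n where x: "x \<in> inf_paths k G" and n: "n \<in> NV k" "cylinder k G (x (\<lambda>_. 0) n) \<subseteq> U"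
      using openin_path_topology_contains_cylinder[OF U(1,2)] .
    define f where "f = x (\<lambda>_. 0) n"
    have f: "f \<in> mor G" "deg G f = n"
      using inf_pathD(1)[OF x in_Omega_zero[OF n(1)]] deg_inf_path_initial[OF x n(1)] by (simp_all add: f_def)
    obtain y where y: "y \<in> inf_paths k G" "y (\<lambda>_. 0) (\<lambda>_. 0) = src G f" "tau k \<alpha> s y \<noteq> tau k \<alpha> t y"
      using assms[unfolded alpha_aperiodic_def] src_in_vertices[OF f(1)] st by blast
    obtain z where z: "z \<in> inf_paths k G" "z (\<lambda>_. 0) (deg G f) = f"
      "\<forall>a b. in_Omega k a b \<longrightarrow> z (\<lambda>i. a i + deg G f i) (\<lambda>i. b i + deg G f i) = y a b"
      using exists_inf_path_prepend[OF f(1) y(1,2)] .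
    have "z \<in> cylinder k G f" using z(1,2) by (simp add: cylinder_def)
    then have "tau k \<alpha> s z = tau k \<alpha> t z" using n(2) U(3) unfolding f_def by blast
    moreover have "fst s \<in> NV k" "fst t \<in> NV k" using st(1,2) by auto
    ultimately show False using tau_eq_if_tau_eq_on_translate[OF _ _ n(1) z(3)[unfolded f(2)]] y(3) by blast
  qed
qed

lemma aperiodic_if_topologically_free:
  assumes "locally_finite_no_sources_sinks k G" and "topologically_free k l G \<alpha>"
  shows "alpha_aperiodic k l G \<alpha>"
  unfolding alpha_aperiodic_def
proof (intro ballI impI)
  fix v s t assume v: "v \<in> vertices G" and st: "s \<in> NV k \<times> NV l" "t \<in> NV k \<times> NV l" "s \<noteq> t"
  let ?E = "{x \<in> inf_paths k G. tau k \<alpha> s x = tau k \<alpha> t x}"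
  obtain x where x: "x \<in> inf_paths k G" "x (\<lambda>_. 0) (\<lambda>_. 0) = v"
    using exists_inf_path_from_vertex[OF assms(1) v] .
  have v_cyl: "cylinder k G v = {x \<in> inf_paths k G. x (\<lambda>_. 0) (\<lambda>_. 0) = v}"
    using v by (simp add: cylinder_def vertices_def)
  show "\<exists>x\<in>inf_paths k G. x (\<lambda>_. 0) (\<lambda>_. 0) = v \<and> tau k \<alpha> s x \<noteq> tau k \<alpha> t x"
  proof (rule ccontr)
    assume "\<not> ?thesis"
    then have "cylinder k G v \<subseteq> ?E" using v_cyl by auto
    moreover have "x \<in> cylinder k G v" using x v_cyl by simp
    moreover have "openin (path_topology k G) (cylinder k G v)"
      using v openin_cylinder by (simp add: vertices_def)
    ultimately have "x \<in> path_topology k G interior_of ?E"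
      unfolding interior_of_def by blast
    then show False using assms(2) st unfolding topologically_free_def by blast
  qed
qed

end

theorem lemma5p6:
  fixes k l :: nat and G :: "'a kgraph" and \<alpha> :: "(nat \<Rightarrow> int) \<Rightarrow> 'a \<Rightarrow> 'a"
  assumes "is_kgraph k G"
    and "locally_finite_no_sources_sinks k G"
    and "is_action l G \<alpha>"
  shows "alpha_aperiodic k l G \<alpha> \<longleftrightarrow> topologically_free k l G \<alpha>"
proof -
  interpret k_graph k G using assms(1) by (rule k_graph.intro)
  show ?thesis
    using topologically_free_if_aperiodic aperiodic_if_topologically_free[OF assms(2)] by blast
qed

end
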